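(* Let $n,m$ be positive integers and $\mathbf a,\mathbf b\in\mathbb N^n$. Then the $m$th Pitman--Stanley polytope $\mathrm{PS}_n^m(\mathbf a,\mathbf b)$ is integrally equivalent to the flow polytope $\mathcal F_{G(n,m)}(\mathbf a,\mathbf b)$.
   Context: For $\mathbf a,\mathbf b\in\mathbb N^n$, $\mathrm{PS}_n^m(\mathbf a,\mathbf b)$ is the set of real matrices $(x_{ij})_{1\le i\le n,\,1\le j\le m}$ with nonnegative entries such that for every $i=1,\dots,n$: $$b_1+\cdots+b_i\le \sum_{k=1}^i x_{km}\le \sum_{k=1}^i x_{k,m-1}\le\cdots\le \sum_{k=1}^i x_{k1}\le a_1+\cdots+a_i .$$ $G(n,m)$ is the directed graph with vertex set $\{(i,j):1\le i\le n,\ 0\le j\le m\}\cup\{s\}$ and edges $((i,j),(i,j+1))$ for $1\le i\le n$, $0\le j\le m-1$; $((i,j),(i+1,j))$ for $1\le i\le n-1$, $0\le j\le m$; and $((n,j),s)$ for $0\le j\le m$. The flow polytope $\mathcal F_{G(n,m)}(\mathbf a,\mathbf b)\subset\mathbb R^{E(G(n,m))}$ is the set of assignments $f:E\to\mathbb R_{\ge0}$ such that at every vertex $v$, (total flow on edges leaving $v$) $-$ (total flow on edges entering $v$) equals the netflow of $v$, where vertex $(i,0)$ has netflow $a_i$, vertex $(i,m)$ has netflow $-b_i$, the sink $s$ has netflow $-\sum_i a_i+\sum_i b_i$, and all other vertices have netflow $0$. Two lattice polytopes $P\subset\mathbb R^p$, $Q\subset\mathbb R^q$ are integrally equivalent if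 there is an affine map $\Phi:\mathbb R^p\to\mathbb R^q$ restricting to a bijection $P\to Q$ that preserves the lattice (i.e. induces a bijection between the integer points of the affine spans of $P$ and $Q$). *)

theory Defs
  imports Complex_Main
begin

text \<open>Points of R^I (I a finite index set) are represented by functions
  'i => real that vanish outside I.\<close>

definition aff_hull :: "('i \<Rightarrow> real) set \<Rightarrow> ('i \<Rightarrow> real) set" where
  "aff_hull P = {x. \<exists>S u. finite S \<and> S \<noteq> {} \<and> S \<subseteq> P \<and> sum u S = 1 \<and>
                       x = (\<lambda>k. \<Sum>y\<in>S. u y * y k)}"

definition int_points :: "'i set \<Rightarrow> ('i \<Rightarrow> real) set" where
  "int_points I = {x. \<forall>k\<in>I. x k \<in> \<int>}"

definition affine_map_on ::
  "'i set \<Rightarrow> 'j set \<Rightarrow> ('j \<Rightarrow> 'i \<Rightarrow> real) \<Rightarrow> ('j \<Rightarrow> real) \<Rightarrow> ('i \<Rightarrow> real) \<Rightarrow> ('j \<Rightarrow> real)" where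
  "affine_map_on I J M c = (\<lambda>x j. if j \<in> J then c j + (\<Sum>i\<in>I. M j i * x i) else 0)"

definition integrally_equivalent ::
  "'i set \<Rightarrow> ('i \<Rightarrow> real) set \<Rightarrow> 'j set \<Rightarrow> ('j \<Rightarrow> real) set \<Rightarrow> bool" where
  "integrally_equivalent I P J Q \<longleftrightarrow>
     (\<exists>M c. bij_betw (affine_map_on I J M c) P Q \<and>
            bij_betw (affine_map_on I J M c) (aff_hull P \<inter> int_points I)
                                              (aff_hull Q \<inter> int_points J))"

definition PS_index :: "nat \<Rightarrow> nat \<Rightarrow> (nat \<times> nat) set" where
  "PS_index n m = {1..n} \<times> {1..m}"

definition PS :: "nat \<Rightarrow> nat \<Rightarrow> (nat \<Rightarrow> nat) \<Rightarrow> (nat \<Rightarrow> nat) \<Rightarrow> (nat \<times> nat \<Rightarrow> real) set" where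
  "PS n m a b = {x. (\<forall>k. k \<notin> PS_index n m \<longrightarrow> x k = 0) \<and>
      (\<forall>k\<in>PS_index n m. 0 \<le> x k) \<and>
      (\<forall>i\<in>{1..n}.
         real (\<Sum>k=1..i. b k) \<le> (\<Sum>k=1..i. x (k, m)) \<and>
         (\<forall>j\<in>{1..<m}. (\<Sum>k=1..i. x (k, j+1)) \<le> (\<Sum>k=1..i. x (k, j))) \<and>
         (\<Sum>k=1..i. x (k, 1)) \<le> real (\<Sum>k=1..i. a k))}"

datatype vertex = V nat nat | Sink

definition G_vertices :: "nat \<Rightarrow> nat \<Rightarrow> vertex set" where
  "G_vertices n m = {V i j | i j. 1 \<le> i \<and> i \<le> n \<and> j \<le> m} \<union> {Sink}"

definition G_edges :: "nat \<Rightarrow> nat \<Rightarrow> (vertex \<times> vertex) set" where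
  "G_edges n m =
     {(V i j, V i (j+1)) | i j. 1 \<le> i \<and> i \<le> n \<and> j + 1 \<le> m} \<union>
     {(V i j, V (i+1) j) | i j. 1 \<le> i \<and> i + 1 \<le> n \<and> j \<le> m} \<union>
     {(V n j, Sink) | j. j \<le> m}"

definition netflow :: "nat \<Rightarrow> nat \<Rightarrow> (nat \<Rightarrow> nat) \<Rightarrow> (nat \<Rightarrow> nat) \<Rightarrow> vertex \<Rightarrow> real" where
  "netflow n m a b v = (case v of
      Sink \<Rightarrow> - real (\<Sum>i=1..n. a i) + real (\<Sum>i=1..n. b i)
    | V i j \<Rightarrow> (if j = 0 then real (a i) else if j = m then - real (b i) else 0))"

definition flow_polytope ::
  "nat \<Rightarrow> nat \<Rightarrow> (nat \<Rightarrow> nat) \<Rightarrow> (nat \<Rightarrow> nat) \<Rightarrow> (vertex \<times> vertex \<Rightarrow> real) set" where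
  "flow_polytope n m a b = {f. (\<forall>e. e \<notin> G_edges n m \<longrightarrow> f e = 0) \<and>
      (\<forall>e\<in>G_edges n m. 0 \<le> f e) \<and>
      (\<forall>v\<in>G_vertices n m.
         (\<Sum>e\<in>{e\<in>G_edges n m. fst e = v}. f e) - (\<Sum>e\<in>{e\<in>G_edges n m. snd e = v}. f e)
           = netflow n m a b v)}"

end

theory Submission
  imports Defs
begin

text \<open>Border a matrix \<open>x\<close> by the columns \<open>x(i,0) = a i\<close> and \<open>x(i,m+1) = b i\<close>
  (\<open>bordered\<close>) and let \<open>C i j = x(1,j) + \<dots> + x(i,j)\<close> (\<open>col_sum\<close>). Then
  \<open>PS\<^sub>n\<^sup>m(a,b)\<close> consists of the nonnegative \<open>x\<close> with \<open>C i (j+1) \<le> C i j\<close> for \<open>0 \<le> j \<le> m\<close>.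
  Send \<open>x\<close> to the flow carrying \<open>x(i,j)\<close> on the horizontal edge \<open>(i,j-1) \<rightarrow> (i,j)\<close> and
  \<open>C i j - C i (j+1)\<close> on the edge leaving \<open>(i,j)\<close> downwards (into the sink if \<open>i = n\<close>).
  Conservation holds by telescoping, and nonnegativity of the flow is exactly the
  Pitman--Stanley inequalities. Conversely, conservation determines the downward flows row by
  row from the horizontal ones, so reading off the horizontal edges is the inverse map. Both
  maps are affine with integer coefficients, hence they also restrict to mutually inverse maps
  between the lattice points of the affine hulls.\<close>

lemma sum_of_bool_eq_mult:
  fixes f :: "'a \<Rightarrow> 'b::semiring_1"
  assumes "finite A"
  shows "(\<Sum>l\<in>A. of_bool (l = j) * f l) = of_bool (j \<in> A) * f j"
proof -
  have "(\<Sum>l\<in>A. of_bool (l = j) * f l) = (\<Sum>l\<in>A. if l = j then f j else 0)"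
    by (rule sum.cong) auto
  with assms show ?thesis
    by simp
qed

lemma affine_map_on_affine_combination:
  assumes "finite S" "sum u S = 1"
  shows "affine_map_on I J M c (\<lambda>k. \<Sum>y\<in>S. u y * h y k) =
         (\<lambda>j. \<Sum>y\<in>S. u y * affine_map_on I J M c (h y) j)"
proof
  fix j
  have "c j = (\<Sum>y\<in>S. u y * c j)"
    using assms(2) by (simp flip: sum_distrib_right)
  moreover have "(\<Sum>i\<in>I. M j i * (\<Sum>y\<in>S. u y * h y i)) = (\<Sum>y\<in>S. u y * (\<Sum>i\<in>I. M j i * h y i))"
    by (simp add: sum_distrib_left mult.left_commute sum.swap[of _ I])
  ultimately show "affine_map_on I J M c (\<lambda>k. \<Sum>y\<in>S. u y * h y k) j =
                   (\<Sum>y\<in>S. u y * affine_map_on I J M c (h y) j)"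
    unfolding affine_map_on_def by (simp add: distrib_left sum.distrib)
qed

lemma aff_hull_mono: "P \<subseteq> Q \<Longrightarrow> aff_hull P \<subseteq> aff_hull Q"
  unfolding aff_hull_def by blast

lemma affine_map_on_aff_hull:
  assumes "x \<in> aff_hull P"
  shows "affine_map_on I J M c x \<in> aff_hull (affine_map_on I J M c ` P)"
proof -
  let ?F = "affine_map_on I J M c"
  obtain S u where S: "finite S" "S \<noteq> {}" "S \<subseteq> P" "sum u S = 1" "x = (\<lambda>k. \<Sum>y\<in>S. u y * y k)"
    using assms unfolding aff_hull_def by blast
  define v where "v z = (\<Sum>y\<in>{y\<in>S. ?F y = z}. u y)" for z
  have "sum v (?F ` S) = 1"
    using S(1,4) unfolding v_def by (simp flip: sum.image_gen)
  moreover have "?F x = (\<lambda>k. \<Sum>z\<in>?F ` S. v z * z k)"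
  proof
    fix k
    have "(\<Sum>y\<in>S. u y * ?F y k) = (\<Sum>z\<in>?F ` S. \<Sum>y\<in>{y\<in>S. ?F y = z}. u y * ?F y k)"
      by (rule sum.image_gen[OF S(1)])
    also have "\<dots> = (\<Sum>z\<in>?F ` S. v z * z k)"
      unfolding v_def sum_distrib_right by (intro sum.cong) auto
    finally show "?F x k = (\<Sum>z\<in>?F ` S. v z * z k)"
      unfolding S(5) affine_map_on_affine_combination[OF S(1,4)] by simp
  qed
  ultimately show ?thesis
    unfolding aff_hull_def using S(1-3) by blast
qed

lemma affine_map_on_inverse_aff_hull:
  assumes "\<forall>x\<in>P. affine_map_on J I M' c' (affine_map_on I J M c x) = x" "x \<in> aff_hull P"
  shows "affine_map_on J I M' c' (affine_map_on I J M c x) = x"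
proof -
  obtain S u where S: "finite S" "S \<subseteq> P" "sum u S = 1" "x = (\<lambda>k. \<Sum>y\<in>S. u y * y k)"
    using assms(2) unfolding aff_hull_def by blast
  have "\<forall>y\<in>S. affine_map_on J I M' c' (affine_map_on I J M c y) = y"
    using assms(1) S(2) by blast
  then show ?thesis
    unfolding S(4) affine_map_on_affine_combination[OF S(1,3)] by simp
qed

lemma affine_map_on_int_points:
  assumes "\<forall>j\<in>J. \<forall>i\<in>I. M j i \<in> \<int>" "\<forall>j\<in>J. c j \<in> \<int>" "x \<in> int_points I"
  shows "affine_map_on I J M c x \<in> int_points J"
  using assms unfolding int_points_def affine_map_on_def by (auto intro!: Ints_add Ints_sum Ints_mult)

lemma integrally_equivalentI:
  fixes I :: "'i set" and J :: "'j set" and P :: "('i \<Rightarrow> real) set" and Q :: "('j \<Rightarrow> real) set"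
    and M :: "'j \<Rightarrow> 'i \<Rightarrow> real" and c :: "'j \<Rightarrow> real"
    and M' :: "'i \<Rightarrow> 'j \<Rightarrow> real" and c' :: "'i \<Rightarrow> real"
  defines "F \<equiv> affine_map_on I J M c" and "G \<equiv> affine_map_on J I M' c'"
  assumes "F ` P \<subseteq> Q" "G ` Q \<subseteq> P"
    and "\<forall>x\<in>P. G (F x) = x" "\<forall>y\<in>Q. F (G y) = y"
    and "\<forall>j\<in>J. \<forall>i\<in>I. M j i \<in> \<int>" "\<forall>j\<in>J. c j \<in> \<int>"
    and "\<forall>i\<in>I. \<forall>j\<in>J. M' i j \<in> \<int>" "\<forall>i\<in>I. c' i \<in> \<int>"
  shows "integrally_equivalent I P J Q"
proof -
  have "F ` aff_hull P \<subseteq> aff_hull Q"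
    using affine_map_on_aff_hull aff_hull_mono[OF assms(3)] unfolding F_def by blast
  moreover have "G ` aff_hull Q \<subseteq> aff_hull P"
    using affine_map_on_aff_hull aff_hull_mono[OF assms(4)] unfolding G_def by blast
  moreover have "\<forall>x\<in>aff_hull P. G (F x) = x" "\<forall>y\<in>aff_hull Q. F (G y) = y"
    using affine_map_on_inverse_aff_hull assms(5,6) unfolding F_def G_def by blast+
  moreover have "F ` int_points I \<subseteq> int_points J" "G ` int_points J \<subseteq> int_points I"
    using affine_map_on_int_points assms(7-10) unfolding F_def G_def by blast+
  ultimately have "bij_betw F (aff_hull P \<inter> int_points I) (aff_hull Q \<inter> int_points J)"
    by (intro bij_betw_byWitness[where f' = G]) auto
  moreover have "bij_betw F P Q"
    using assms(3-6) by (intro bij_betw_byWitness[where f' = G])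
  ultimately show ?thesis
    unfolding integrally_equivalent_def F_def by blast
qed

definition down_edge :: "nat \<Rightarrow> nat \<Rightarrow> nat \<Rightarrow> vertex \<times> vertex" where
  "down_edge n i j = (if i < n then (V i j, V (Suc i) j) else (V n j, Sink))"

lemma down_edge_in_G_edges: "1 \<le> i \<Longrightarrow> i \<le> n \<Longrightarrow> j \<le> m \<Longrightarrow> down_edge n i j \<in> G_edges n m"
  unfolding G_edges_def down_edge_def by auto

lemma horizontal_edge_in_G_edges:
  "1 \<le> i \<Longrightarrow> i \<le> n \<Longrightarrow> Suc j \<le> m \<Longrightarrow> (V i j, V i (Suc j)) \<in> G_edges n m"
  unfolding G_edges_def by auto

lemma finite_G_edges: "finite (G_edges n m)"
proof -
  let ?U = "(\<lambda>(i, j). V i j) ` ({0..n} \<times> {0..m}) \<union> {Sink}"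
  have "G_edges n m \<subseteq> ?U \<times> ?U"
    unfolding G_edges_def by force
  then show ?thesis
    by (rule finite_subset) auto
qed

lemma G_edges_cases:
  assumes "e \<in> G_edges n m" "0 < n"
  obtains (horizontal) i j where "1 \<le> i" "i \<le> n" "Suc j \<le> m" "e = (V i j, V i (Suc j))"
  | (down) i j where "1 \<le> i" "i \<le> n" "j \<le> m" "e = down_edge n i j"
  using assms unfolding G_edges_def down_edge_def
  by (auto simp: Suc_le_eq)

text \<open>A non-horizontal edge leaving \<open>V i j\<close> carries \<open>C i j - C i (j+1)\<close>; the matrix part
  collects the entries of \<open>x\<close>, the offset the border entries \<open>a\<close> and \<open>b\<close>.\<close>

fun ps_flow_matrix :: "vertex \<times> vertex \<Rightarrow> nat \<times> nat \<Rightarrow> real" where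
  "ps_flow_matrix (V i j, w) (k, l) =
     (if w = V i (Suc j) then of_bool ((k, l) = (i, Suc j))
      else of_bool (k \<le> i) * (of_bool (l = j) - of_bool (l = Suc j)))"
| "ps_flow_matrix (Sink, w) kl = 0"

fun ps_flow_offset :: "nat \<Rightarrow> (nat \<Rightarrow> nat) \<Rightarrow> (nat \<Rightarrow> nat) \<Rightarrow> vertex \<times> vertex \<Rightarrow> real" where
  "ps_flow_offset m a b (V i j, w) =
     (if w = V i (Suc j) then 0
      else of_bool (j = 0) * real (\<Sum>k=1..i. a k) - of_bool (j = m) * real (\<Sum>k=1..i. b k))"
| "ps_flow_offset m a b (Sink, w) = 0"

definition ps_to_flow ::
    "nat \<Rightarrow> nat \<Rightarrow> (nat \<Rightarrow> nat) \<Rightarrow> (nat \<Rightarrow> nat) \<Rightarrow> (nat \<times> nat \<Rightarrow> real) \<Rightarrow> vertex \<times> vertex \<Rightarrow> real" where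
  "ps_to_flow n m a b = affine_map_on (PS_index n m) (G_edges n m) ps_flow_matrix (ps_flow_offset m a b)"

fun flow_ps_matrix :: "nat \<times> nat \<Rightarrow> vertex \<times> vertex \<Rightarrow> real" where
  "flow_ps_matrix (i, j) e = of_bool (e = (V i (j - 1), V i j))"

definition flow_to_ps :: "nat \<Rightarrow> nat \<Rightarrow> (vertex \<times> vertex \<Rightarrow> real) \<Rightarrow> nat \<times> nat \<Rightarrow> real" where
  "flow_to_ps n m = affine_map_on (G_edges n m) (PS_index n m) flow_ps_matrix (\<lambda>_. 0)"

definition bordered ::
    "nat \<Rightarrow> (nat \<Rightarrow> nat) \<Rightarrow> (nat \<Rightarrow> nat) \<Rightarrow> (nat \<times> nat \<Rightarrow> real) \<Rightarrow> nat \<times> nat \<Rightarrow> real" where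
  "bordered m a b x = (\<lambda>(i, j). if j = 0 then real (a i) else if j = Suc m then real (b i) else x (i, j))"

definition col_sum ::
    "nat \<Rightarrow> (nat \<Rightarrow> nat) \<Rightarrow> (nat \<Rightarrow> nat) \<Rightarrow> (nat \<times> nat \<Rightarrow> real) \<Rightarrow> nat \<Rightarrow> nat \<Rightarrow> real" where
  "col_sum m a b x i j = (\<Sum>k=1..i. bordered m a b x (k, j))"

lemma col_sum_column_0 [simp]: "col_sum m a b x i 0 = real (\<Sum>k=1..i. a k)"
  unfolding col_sum_def bordered_def by (simp add: of_nat_sum)

lemma col_sum_column_Suc_m [simp]: "col_sum m a b x i (Suc m) = real (\<Sum>k=1..i. b k)"
  unfolding col_sum_def bordered_def by (simp add: of_nat_sum)

lemma col_sum_inner_column: "1 \<le> j \<Longrightarrow> j \<le> m \<Longrightarrow> col_sum m a b x i j = (\<Sum>k=1..i. x (k, j))"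
  unfolding col_sum_def bordered_def by simp

lemma col_sum_row_0 [simp]: "col_sum m a b x 0 j = 0"
  unfolding col_sum_def by simp

lemma col_sum_Suc_row: "col_sum m a b x (Suc i) j = col_sum m a b x i j + bordered m a b x (Suc i, j)"
  unfolding col_sum_def by simp

lemma sum_PS_index: "(\<Sum>kl\<in>PS_index n m. g kl) = (\<Sum>k=1..n. \<Sum>l=1..m. g (k, l))"
  unfolding PS_index_def by (simp add: sum.cartesian_product)

lemma ps_to_flow_horizontal:
  assumes "1 \<le> i" "i \<le> n" "Suc j \<le> m"
  shows "ps_to_flow n m a b x (V i j, V i (Suc j)) = x (i, Suc j)"
proof -
  have "(\<Sum>kl\<in>PS_index n m. ps_flow_matrix (V i j, V i (Suc j)) kl * x kl) =
        (\<Sum>kl\<in>PS_index n m. if kl = (i, Suc j) then x kl else 0)"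
    by (intro sum.cong) auto
  also have "\<dots> = x (i, Suc j)"
    using assms unfolding PS_index_def by simp
  finally show ?thesis
    using horizontal_edge_in_G_edges[OF assms] unfolding ps_to_flow_def affine_map_on_def by simp
qed

lemma ps_to_flow_down:
  assumes "1 \<le> i" "i \<le> n" "j \<le> m"
  shows "ps_to_flow n m a b x (down_edge n i j) = col_sum m a b x i j - col_sum m a b x i (Suc j)"
proof -
  obtain w where e: "down_edge n i j = (V i j, w)" "w \<noteq> V i (Suc j)"
    using assms(2) unfolding down_edge_def by (cases "i < n") auto
  have row: "(\<Sum>l=1..m. ps_flow_matrix (V i j, w) (k, l) * x (k, l)) =
     of_bool (k \<le> i) * (of_bool (1 \<le> j) * x (k, j) - of_bool (Suc j \<le> m) * x (k, Suc j))" for k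
  proof -
    have "(\<Sum>l=1..m. ps_flow_matrix (V i j, w) (k, l) * x (k, l)) =
      of_bool (k \<le> i) * ((\<Sum>l=1..m. of_bool (l = j) * x (k, l)) - (\<Sum>l=1..m. of_bool (l = Suc j) * x (k, l)))"
      using e(2) by (simp add: sum_distrib_left left_diff_distrib sum_subtractf mult.assoc del: sum_of_bool_mult_eq)
    also have "\<dots> = of_bool (k \<le> i) * (of_bool (1 \<le> j) * x (k, j) - of_bool (Suc j \<le> m) * x (k, Suc j))"
      using assms(3) by (simp add: sum_of_bool_eq_mult del: sum_of_bool_mult_eq)
    finally show ?thesis .
  qed
  have "ps_to_flow n m a b x (down_edge n i j) =
    ps_flow_offset m a b (V i j, w) + (\<Sum>k=1..n. \<Sum>l=1..m. ps_flow_matrix (V i j, w) (k, l) * x (k, l))"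
    using down_edge_in_G_edges[OF assms] unfolding ps_to_flow_def affine_map_on_def sum_PS_index e by simp
  also have "\<dots> = ps_flow_offset m a b (V i j, w) +
      (\<Sum>k=1..i. of_bool (1 \<le> j) * x (k, j) - of_bool (Suc j \<le> m) * x (k, Suc j))"
  proof -
    have "{1..n} \<inter> {k. k \<le> i} = {1..i}"
      using assms(2) by auto
    then show ?thesis
      unfolding row by simp
  qed
  also have "\<dots> = col_sum m a b x i j - col_sum m a b x i (Suc j)"
    using e(2) assms(3) unfolding col_sum_def bordered_def by (auto simp: sum_subtractf of_nat_sum)
  finally show ?thesis .
qed

definition net_outflow :: "nat \<Rightarrow> nat \<Rightarrow> (vertex \<times> vertex \<Rightarrow> real) \<Rightarrow> vertex \<Rightarrow> real" where
  "net_outflow n m f v =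
     (\<Sum>e\<in>{e\<in>G_edges n m. fst e = v}. f e) - (\<Sum>e\<in>{e\<in>G_edges n m. snd e = v}. f e)"

lemma mem_flow_polytope_iff:
  "f \<in> flow_polytope n m a b \<longleftrightarrow>
     (\<forall>e. e \<notin> G_edges n m \<longrightarrow> f e = 0) \<and> (\<forall>e\<in>G_edges n m. 0 \<le> f e) \<and>
     (\<forall>v\<in>G_vertices n m. net_outflow n m f v = netflow n m a b v)"
  unfolding flow_polytope_def net_outflow_def by blast

lemma net_outflow_V:
  assumes "1 \<le> i" "i \<le> n" "j \<le> m"
  shows "net_outflow n m f (V i j) =
     (if Suc j \<le> m then f (V i j, V i (Suc j)) else 0) + f (down_edge n i j)
     - (if 1 \<le> j then f (V i (j - 1), V i j) else 0) - (if 2 \<le> i then f (down_edge n (i - 1) j) else 0)"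
proof -
  have "{e\<in>G_edges n m. fst e = V i j} =
        (if Suc j \<le> m then {(V i j, V i (Suc j))} else {}) \<union> {down_edge n i j}"
    using assms unfolding G_edges_def down_edge_def by auto
  moreover have "{e\<in>G_edges n m. snd e = V i j} =
        (if 1 \<le> j then {(V i (j - 1), V i j)} else {}) \<union> (if 2 \<le> i then {down_edge n (i - 1) j} else {})"
    using assms unfolding G_edges_def down_edge_def by (auto split: if_splits)
  moreover have "(V i j, V i (Suc j)) \<noteq> down_edge n i j" "(V i (j - 1), V i j) \<noteq> down_edge n (i - 1) j"
    unfolding down_edge_def by auto
  ultimately show ?thesis
    unfolding net_outflow_def by auto
qed

lemma net_outflow_Sink: "net_outflow n m f Sink = - (\<Sum>j\<le>m. f (V n j, Sink))"
proof -
  have out: "{e\<in>G_edges n m. fst e = Sink} = {}"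
    and into: "{e\<in>G_edges n m. snd e = Sink} = (\<lambda>j. (V n j, Sink)) ` {..m}"
    unfolding G_edges_def by auto
  show ?thesis
    unfolding net_outflow_def out into by (simp add: sum.reindex inj_on_def)
qed

lemma net_outflow_ps_to_flow:
  assumes "0 < n" "0 < m" "v \<in> G_vertices n m"
  shows "net_outflow n m (ps_to_flow n m a b x) v = netflow n m a b v"
  using assms(3) unfolding G_vertices_def
proof (elim UnE CollectE exE conjE)
  fix i j assume v: "v = V i j" and i: "1 \<le> i" "i \<le> n" and j: "j \<le> m"
  obtain i' where i': "i = Suc i'"
    using i by (cases i) auto
  have "1 \<le> j \<Longrightarrow> ps_to_flow n m a b x (V i (j - 1), V i j) = x (i, j)"
    using ps_to_flow_horizontal[of i n "j - 1" m a b x] i j by simp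
  then have "net_outflow n m (ps_to_flow n m a b x) v =
     (if Suc j \<le> m then x (i, Suc j) else 0) + (col_sum m a b x i j - col_sum m a b x i (Suc j))
     - (if 1 \<le> j then x (i, j) else 0) - (col_sum m a b x i' j - col_sum m a b x i' (Suc j))"
    using i j unfolding v net_outflow_V[OF i j]
    by (cases i') (simp_all add: i' ps_to_flow_horizontal ps_to_flow_down)
  also have "\<dots> = netflow n m a b v"
    using assms(2) j unfolding v i' col_sum_Suc_row netflow_def bordered_def by auto
  finally show ?thesis .
next
  assume "v \<in> {Sink}"
  then have v: "v = Sink"
    by simp
  have "(\<Sum>j\<le>m. ps_to_flow n m a b x (V n j, Sink)) = (\<Sum>j\<le>m. col_sum m a b x n j - col_sum m a b x n (Suc j))"
    using ps_to_flow_down[of n n _ m a b x] assms(1) unfolding down_edge_def by simp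
  also have "\<dots> = col_sum m a b x n 0 - col_sum m a b x n (Suc m)"
    by (rule sum_telescope)
  finally show ?thesis
    unfolding v net_outflow_Sink netflow_def by simp
qed

lemma PS_iff_col_sum_decreasing:
  assumes "0 < m"
  shows "x \<in> PS n m a b \<longleftrightarrow>
     (\<forall>k. k \<notin> PS_index n m \<longrightarrow> x k = 0) \<and> (\<forall>k\<in>PS_index n m. 0 \<le> x k) \<and>
     (\<forall>i\<in>{1..n}. \<forall>j\<le>m. col_sum m a b x i (Suc j) \<le> col_sum m a b x i j)"
proof -
  have split_columns: "(\<forall>j\<le>m. P j) \<longleftrightarrow> P m \<and> (\<forall>j\<in>{1..<m}. P j) \<and> P 0" for P
    using assms by (metis atLeastLessThan_iff le_eq_less_or_eq less_one not_less)
  show ?thesis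
    unfolding PS_def split_columns using assms by (auto simp: col_sum_inner_column)
qed

lemma ps_to_flow_in_flow_polytope:
  assumes "0 < n" "0 < m" "x \<in> PS n m a b"
  shows "ps_to_flow n m a b x \<in> flow_polytope n m a b"
  unfolding mem_flow_polytope_iff
proof (intro conjI allI impI ballI)
  show "ps_to_flow n m a b x e = 0" if "e \<notin> G_edges n m" for e
    using that unfolding ps_to_flow_def affine_map_on_def by simp
  show "0 \<le> ps_to_flow n m a b x e" if "e \<in> G_edges n m" for e
    using that assms(1)
  proof (cases rule: G_edges_cases)
    case (horizontal i j)
    then have "(i, Suc j) \<in> PS_index n m"
      unfolding PS_index_def by auto
    with horizontal show ?thesis
      using assms(3) unfolding PS_iff_col_sum_decreasing[OF assms(2)] by (simp add: ps_to_flow_horizontal)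
  next
    case (down i j)
    then show ?thesis
      using assms(3) unfolding PS_iff_col_sum_decreasing[OF assms(2)] by (simp add: ps_to_flow_down)
  qed
  show "net_outflow n m (ps_to_flow n m a b x) v = netflow n m a b v" if "v \<in> G_vertices n m" for v
    using net_outflow_ps_to_flow[OF assms(1,2) that] .
qed

lemma flow_to_ps_apply:
  "flow_to_ps n m f (i, j) = (if (i, j) \<in> PS_index n m then f (V i (j - 1), V i j) else 0)"
proof -
  have "(i, j) \<in> PS_index n m \<Longrightarrow> (V i (j - 1), V i j) \<in> G_edges n m"
    using horizontal_edge_in_G_edges[of i n "j - 1" m] unfolding PS_index_def by auto
  then show ?thesis
    unfolding flow_to_ps_def affine_map_on_def by (simp add: sum_of_bool_eq_mult[OF finite_G_edges])
qed

lemma down_edges_determined_by_horizontal: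
  assumes net: "\<And>i j. 1 \<le> i \<Longrightarrow> i \<le> n \<Longrightarrow> j \<le> m \<Longrightarrow>
                 net_outflow n m f (V i j) = net_outflow n m g (V i j)"
    and horizontal: "\<And>i j. 1 \<le> i \<Longrightarrow> i \<le> n \<Longrightarrow> Suc j \<le> m \<Longrightarrow>
                 f (V i j, V i (Suc j)) = g (V i j, V i (Suc j))"
    and "1 \<le> i" "i \<le> n" "j \<le> m"
  shows "f (down_edge n i j) = g (down_edge n i j)"
  using assms(3-5)
proof (induction i arbitrary: j rule: nat_induct_at_least)
  case base
  then show ?case
    using net[of 1 j] horizontal[of 1 j] horizontal[of 1 "j - 1"] by (simp add: net_outflow_V split: if_splits)
next
  case (Suc i)
  then show ?case
    using net[of "Suc i" j] horizontal[of "Suc i" j] horizontal[of "Suc i" "j - 1"]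
    by (simp add: net_outflow_V split: if_splits)
qed

lemma ps_to_flow_flow_to_ps:
  assumes "0 < n" "0 < m" "f \<in> flow_polytope n m a b"
  shows "ps_to_flow n m a b (flow_to_ps n m f) = f"
proof
  let ?g = "ps_to_flow n m a b (flow_to_ps n m f)"
  have horizontal: "?g (V i j, V i (Suc j)) = f (V i j, V i (Suc j))"
    if "1 \<le> i" "i \<le> n" "Suc j \<le> m" for i j
    using that by (simp add: ps_to_flow_horizontal flow_to_ps_apply PS_index_def)
  have net: "net_outflow n m ?g (V i j) = net_outflow n m f (V i j)"
    if "1 \<le> i" "i \<le> n" "j \<le> m" for i j
  proof -
    have "V i j \<in> G_vertices n m"
      using that unfolding G_vertices_def by auto
    then show ?thesis
      using assms net_outflow_ps_to_flow unfolding mem_flow_polytope_iff by metis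
  qed
  fix e
  show "?g e = f e"
  proof (cases "e \<in> G_edges n m")
    case True
    then show ?thesis
      using assms(1)
    proof (cases rule: G_edges_cases)
      case (down i j)
      then show ?thesis
        using down_edges_determined_by_horizontal[of n m ?g f] net horizontal by blast
    qed (simp add: horizontal)
  next
    case False
    then have "?g e = 0"
      unfolding ps_to_flow_def affine_map_on_def by simp
    moreover have "f e = 0"
      using False assms(3) unfolding mem_flow_polytope_iff by blast
    ultimately show ?thesis
      by simp
  qed
qed

lemma flow_to_ps_in_PS:
  assumes "0 < n" "0 < m" "f \<in> flow_polytope n m a b"
  shows "flow_to_ps n m f \<in> PS n m a b"
  unfolding PS_iff_col_sum_decreasing[OF assms(2)]
proof (intro conjI allI impI ballI)
  have nonneg: "\<forall>e\<in>G_edges n m. 0 \<le> f e"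
    using assms(3) unfolding mem_flow_polytope_iff by blast
  show "flow_to_ps n m f k = 0" if "k \<notin> PS_index n m" for k
    using that by (cases k) (simp add: flow_to_ps_apply)
  show "0 \<le> flow_to_ps n m f k" if k_index: "k \<in> PS_index n m" for k
  proof -
    obtain i j where k: "k = (i, j)" "1 \<le> i" "i \<le> n" "1 \<le> j" "j \<le> m"
      using k_index unfolding PS_index_def by auto
    then have "(V i (j - 1), V i j) \<in> G_edges n m"
      using horizontal_edge_in_G_edges[of i n "j - 1" m] by simp
    then show ?thesis
      using nonneg k_index unfolding k(1) by (simp add: flow_to_ps_apply)
  qed
  fix i j assume "i \<in> {1..n}" "j \<le> m"
  then have "col_sum m a b (flow_to_ps n m f) i j - col_sum m a b (flow_to_ps n m f) i (Suc j) = f (down_edge n i j)"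
    using ps_to_flow_flow_to_ps[OF assms] ps_to_flow_down[of i n j m a b "flow_to_ps n m f"] by simp
  also have "\<dots> \<ge> 0"
    using nonneg down_edge_in_G_edges \<open>i \<in> {1..n}\<close> \<open>j \<le> m\<close> by auto
  finally show "col_sum m a b (flow_to_ps n m f) i (Suc j) \<le> col_sum m a b (flow_to_ps n m f) i j"
    by simp
qed

lemma flow_to_ps_ps_to_flow:
  assumes "0 < m" "x \<in> PS n m a b"
  shows "flow_to_ps n m (ps_to_flow n m a b x) = x"
proof
  fix k :: "nat \<times> nat"
  obtain i j where k: "k = (i, j)"
    by fastforce
  show "flow_to_ps n m (ps_to_flow n m a b x) k = x k"
    using assms ps_to_flow_horizontal[of i n "j - 1" m a b x]
    unfolding k PS_iff_col_sum_decreasing[OF assms(1)] by (auto simp: flow_to_ps_apply PS_index_def)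
qed

lemma ps_flow_matrix_Ints: "ps_flow_matrix e kl \<in> \<int>"
  by (induction e kl rule: ps_flow_matrix.induct) auto

lemma ps_flow_offset_Ints: "ps_flow_offset m a b e \<in> \<int>"
  by (induction m a b e rule: ps_flow_offset.induct) (auto intro!: Ints_diff Ints_sum)

lemma flow_ps_matrix_Ints: "flow_ps_matrix kl e \<in> \<int>"
  by (cases kl) simp

theorem theorem3p4:
  fixes n m :: nat and a b :: "nat \<Rightarrow> nat"
  assumes "0 < n" and "0 < m"
  shows "integrally_equivalent (PS_index n m) (PS n m a b)
           (G_edges n m) (flow_polytope n m a b)"
proof (rule integrally_equivalentI[where M = ps_flow_matrix and c = "ps_flow_offset m a b"
                                     and M' = flow_ps_matrix and c' = "\<lambda>_. 0"], fold ps_to_flow_def flow_to_ps_def)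
  show "ps_to_flow n m a b ` PS n m a b \<subseteq> flow_polytope n m a b"
    using ps_to_flow_in_flow_polytope[OF assms] by blast
  show "flow_to_ps n m ` flow_polytope n m a b \<subseteq> PS n m a b"
    using flow_to_ps_in_PS[OF assms] by blast
  show "\<forall>x\<in>PS n m a b. flow_to_ps n m (ps_to_flow n m a b x) = x"
    using flow_to_ps_ps_to_flow[OF assms(2)] by blast
  show "\<forall>f\<in>flow_polytope n m a b. ps_to_flow n m a b (flow_to_ps n m f) = f"
    using ps_to_flow_flow_to_ps[OF assms] by blast
qed (simp_all add: ps_flow_matrix_Ints ps_flow_offset_Ints flow_ps_matrix_Ints)

end
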